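(* Let $K,G,m_0,A_g,B_g,\bar f_c,\bar f_t>0$, $m_g'(p)=A_g e^{\frac{p-\bar f_t/3}{B_g\bar f_c}}$, and let $p^{tr}\in\mathbb R$, $\varrho^{tr}\ge0$. For each $\gamma\ge0$ consider the equations $$p_\gamma+\gamma K\frac{m_g'(p_\gamma)}{\bar f_c}-p^{tr}=0,\qquad \varrho_\gamma-\Big[\varrho^{tr}-\gamma2G\Big(\frac{3\varrho_\gamma}{\bar f_c^2}+\frac{m_0}{\sqrt6\bar f_c}\Big)\Big]^+=0.$$ Then the maps $\hat p_{tr}:\gamma\mapsto p_\gamma$ and $\hat\varrho_{tr}:\gamma\mapsto\varrho_\gamma$ are well defined on $\mathbb R_+$ (each equation has a unique real solution). Moreover, $\hat p_{tr}$ is smooth and decreasing on $\mathbb R_+$, $\hat\varrho_{tr}$ is decreasing on $\big[0,\frac{\sqrt6\bar f_c\varrho^{tr}}{2Gm_0}\big)$, and $$\hat\varrho_{tr}(\gamma)=\frac{1}{1+\gamma\frac{6G}{\bar f_c^2}}\Big(\varrho^{tr}-\gamma\frac{2Gm_0}{\sqrt6\bar f_c}\Big)^+\quad\forall\gamma\ge0.$$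
   Context: $\mathbb R_+=[0,\infty)$; $(x)^+=\max\{0,x\}$. *)

theory Defs
  imports "HOL-Analysis.Analysis"
begin

definition mg' :: "real \<Rightarrow> real \<Rightarrow> real \<Rightarrow> real \<Rightarrow> real \<Rightarrow> real" where
  "mg' Ag Bg fc ft p = Ag * exp ((p - ft / 3) / (Bg * fc))"

definition smooth_on :: "real set \<Rightarrow> (real \<Rightarrow> real) \<Rightarrow> bool" where
  "smooth_on S f \<longleftrightarrow> (\<exists>D :: nat \<Rightarrow> real \<Rightarrow> real. D 0 = f \<and>
      (\<forall>n. \<forall>x\<in>S. (D n has_real_derivative D (Suc n) x) (at x within S)))"

end

theory Submission
  imports Defs "HOL-Complex_Analysis.Complex_Analysis"
begin

text \<open>The equation for \<open>p\<close> reads \<open>p + \<gamma> c M(p) = p\<^sup>t\<^sup>r\<close> with \<open>M\<close> a positive increasing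
  exponential, so for \<open>\<gamma> \<ge> 0\<close> the left-hand side is strictly increasing and unbounded in \<open>p\<close>,
  which gives a unique root. Solving for \<open>\<gamma>\<close> instead gives the strictly decreasing function
  \<open>\<gamma>(p) = (p\<^sup>t\<^sup>r - p) / (c M(p))\<close> on \<open>p < p\<^sup>t\<^sup>r + \<beta>\<close>; the root map is its inverse, hence decreasing,
  and by the inverse function theorem it solves the autonomous equation \<open>p' = \<Phi>(p)\<close> with
  \<open>\<Phi>(p) = -\<beta> c M(p) / (\<beta> + p\<^sup>t\<^sup>r - p)\<close>. Every derivative of such a solution is a function
  \<open>\<psi>\<^sub>n\<close> of \<open>p\<close> with \<open>\<psi>\<^sub>n\<^sub>+\<^sub>1 = \<psi>\<^sub>n' \<Phi>\<close>; since \<open>\<Phi>\<close> extends holomorphically, all \<open>\<psi>\<^sub>n\<close> are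
  differentiable and the root map is smooth. The equation for \<open>\<rho>\<close> is piecewise linear,
  \<open>\<rho> = max 0 (b - k \<rho>)\<close>, and is solved explicitly.\<close>

lemma monotone_on_cong:
  assumes "monotone_on A r s f" "\<And>x. x \<in> A \<Longrightarrow> f x = g x"
  shows "monotone_on A r s g"
  using assms by (simp add: monotone_on_def)

lemma smooth_on_cong:
  assumes "smooth_on S f" "\<And>x. x \<in> S \<Longrightarrow> f x = g x"
  shows "smooth_on S g"
proof -
  obtain D where D: "D 0 = f" "\<And>n x. x \<in> S \<Longrightarrow> (D n has_real_derivative D (Suc n) x) (at x within S)"
    using assms(1) unfolding smooth_on_def by blast
  define D' where "D' n = (if n = 0 then g else D n)" for n
  have "(D' n has_real_derivative D' (Suc n) x) (at x within S)" if "x \<in> S" for n x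
  proof (cases n)
    case 0
    show ?thesis
      using has_field_derivative_transform_within[OF D(2)[OF that] zero_less_one that] 0 D(1) assms(2)
      by (simp add: D'_def)
  qed (use D(2)[OF that] in \<open>simp add: D'_def\<close>)
  moreover have "D' 0 = g" by (simp add: D'_def)
  ultimately show ?thesis unfolding smooth_on_def by blast
qed

fun lie_iterate :: "(complex \<Rightarrow> complex) \<Rightarrow> nat \<Rightarrow> complex \<Rightarrow> complex" where
  "lie_iterate \<Phi> 0 = (\<lambda>z. z)"
| "lie_iterate \<Phi> (Suc n) = (\<lambda>z. deriv (lie_iterate \<Phi> n) z * \<Phi> z)"

lemma lie_iterate_holomorphic:
  assumes "\<Phi> holomorphic_on U" "open U"
  shows "lie_iterate \<Phi> n holomorphic_on U"
proof (induction n)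
  case (Suc n)
  then show ?case using holomorphic_deriv[OF Suc assms(2)] assms(1)
    by (simp add: holomorphic_on_mult)
qed simp

lemma smooth_on_autonomous_ode:
  fixes f \<phi> :: "real \<Rightarrow> real" and \<Phi> :: "complex \<Rightarrow> complex"
  assumes "open U" "\<Phi> holomorphic_on U"
    and "\<And>x. x \<in> S \<Longrightarrow> complex_of_real (f x) \<in> U"
    and "\<And>y. complex_of_real y \<in> U \<Longrightarrow> \<Phi> (complex_of_real y) = complex_of_real (\<phi> y)"
    and "\<And>x. x \<in> S \<Longrightarrow> (f has_real_derivative \<phi> (f x)) (at x within S)"
  shows "smooth_on S f"
  unfolding smooth_on_def
proof (intro exI[of _ "\<lambda>n x. Re (lie_iterate \<Phi> n (of_real (f x)))"] conjI allI ballI)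
  fix n and x assume x: "x \<in> S"
  have "(lie_iterate \<Phi> n has_field_derivative deriv (lie_iterate \<Phi> n) (of_real (f x))) (at (of_real (f x)))"
    using holomorphic_derivI[OF lie_iterate_holomorphic[OF assms(2,1)] assms(1) assms(3)[OF x]] .
  then have "((\<lambda>y. Re (lie_iterate \<Phi> n (of_real y))) has_real_derivative
      Re (deriv (lie_iterate \<Phi> n) (of_real (f x)))) (at (f x))"
    by (intro has_field_derivative_Re has_vector_derivative_real_field)
  from DERIV_chain2[OF this assms(5)[OF x]]
  show "((\<lambda>x. Re (lie_iterate \<Phi> n (of_real (f x)))) has_real_derivative
      Re (lie_iterate \<Phi> (Suc n) (of_real (f x)))) (at x within S)"
    using assms(4)[OF assms(3)[OF x]] by simp
qed simp

locale exp_root_equation =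
  fixes A \<beta> a c q :: real
  assumes A_pos: "0 < A" and \<beta>_pos: "0 < \<beta>" and c_pos: "0 < c"
begin

definition M :: "real \<Rightarrow> real" where
  "M p = A * exp ((p - a) / \<beta>)"

definition gamma_of :: "real \<Rightarrow> real" where
  "gamma_of p = (q - p) / (c * M p)"

text \<open>The branch \<open>p < q + \<beta>\<close> extends beyond the root \<open>p = q\<close> at \<open>\<gamma> = 0\<close>, so that the inverse
  function theorem applies there as well.\<close>
definition solution :: "real \<Rightarrow> real" where
  "solution \<gamma> = (THE p. p < q + \<beta> \<and> gamma_of p = \<gamma>)"

definition slope :: "real \<Rightarrow> real" where
  "slope p = - (\<beta> * c * M p) / (\<beta> + q - p)"

definition slope_complex :: "complex \<Rightarrow> complex" where
  "slope_complex z = - of_real (\<beta> * c * A) * exp ((z - of_real a) / of_real \<beta>) / (of_real (\<beta> + q) - z)"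

lemma M_pos: "0 < M p"
  unfolding M_def using A_pos by simp

lemma M_strict_mono: "p < p' \<Longrightarrow> M p < M p'"
  unfolding M_def using A_pos \<beta>_pos by (simp add: divide_strict_right_mono)

lemma M_has_derivative: "(M has_real_derivative M p / \<beta>) (at p)"
  unfolding M_def[abs_def] using \<beta>_pos
  by (auto intro!: derivative_eq_intros simp: field_simps)

lemma root_le:
  assumes "0 \<le> \<gamma>" "p + \<gamma> * c * M p - q = 0"
  shows "p \<le> q"
proof -
  have "0 \<le> \<gamma> * c * M p"
    using assms(1) M_pos[of p] c_pos by simp
  then show ?thesis
    using assms(2) by linarith
qed

lemma equation_ex1:
  assumes "0 \<le> \<gamma>"
  shows "\<exists>!p. p + \<gamma> * c * M p - q = 0"
proof -
  let ?F = "\<lambda>p. p + \<gamma> * c * M p"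
  have F_strict_mono: "strict_mono ?F"
  proof (rule strict_monoI)
    fix p p' :: real assume "p < p'"
    moreover have "\<gamma> * c * M p \<le> \<gamma> * c * M p'"
      using M_strict_mono[OF \<open>p < p'\<close>] assms c_pos by (intro mult_left_mono) auto
    ultimately show "?F p < ?F p'"
      by linarith
  qed
  define p0 where "p0 = min a (q - \<gamma> * c * A)"
  have "M p0 \<le> A"
    unfolding M_def p0_def using A_pos \<beta>_pos by (simp add: divide_nonpos_pos)
  then have "\<gamma> * c * M p0 \<le> \<gamma> * c * A"
    using assms c_pos by (intro mult_left_mono) auto
  then have "?F p0 \<le> q"
    unfolding p0_def by linarith
  moreover have "q \<le> ?F q"
    using assms c_pos M_pos[of q] by simp
  moreover have "p0 \<le> q"
    unfolding p0_def using assms c_pos A_pos by (simp add: min.coboundedI2)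
  moreover have "continuous_on {p0..q} ?F"
    unfolding M_def using \<beta>_pos by (intro continuous_intros) auto
  ultimately obtain p where "?F p = q"
    using IVT'[of ?F p0 q q] by blast
  then show ?thesis
    using strict_mono_eq[OF F_strict_mono] by (intro ex1I[of _ p]) (auto simp: algebra_simps)
qed

lemma equation_iff_gamma_of:
  assumes "0 \<le> \<gamma>"
  shows "p + \<gamma> * c * M p - q = 0 \<longleftrightarrow> p < q + \<beta> \<and> gamma_of p = \<gamma>"
  using root_le[OF assms, of p] M_pos[of p] c_pos \<beta>_pos
  unfolding gamma_of_def by (auto simp: field_simps)

lemma gamma_of_has_derivative:
  "(gamma_of has_real_derivative - (\<beta> + q - p) / (\<beta> * c * M p)) (at p)"
  unfolding gamma_of_def[abs_def] using M_pos[of p] c_pos \<beta>_pos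
  by (auto intro!: derivative_eq_intros M_has_derivative simp: field_simps power2_eq_square)

lemma gamma_of_strict_antimono: "strict_antimono_on {..<q + \<beta>} gamma_of"
proof (rule monotone_onI)
  fix p p' assume "p \<in> {..<q + \<beta>}" "p' \<in> {..<q + \<beta>}" "p < p'"
  show "gamma_of p' < gamma_of p"
  proof (rule DERIV_neg_imp_decreasing[OF \<open>p < p'\<close>])
    fix x assume "p \<le> x" "x \<le> p'"
    then have "0 < \<beta> + q - x"
      using \<open>p' \<in> {..<q + \<beta>}\<close> by simp
    then have "- (\<beta> + q - x) / (\<beta> * c * M x) < 0"
      using M_pos[of x] c_pos \<beta>_pos by (simp add: divide_neg_pos)
    then show "\<exists>y. (gamma_of has_real_derivative y) (at x) \<and> y < 0"
      using gamma_of_has_derivative by blast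
  qed
qed

lemma solution_gamma_of:
  assumes "p < q + \<beta>"
  shows "solution (gamma_of p) = p"
  unfolding solution_def
proof (rule the_equality)
  fix p' assume "p' < q + \<beta> \<and> gamma_of p' = gamma_of p"
  then show "p' = p"
    using assms gamma_of_strict_antimono
    by (auto simp: strict_antimono_iff_antimono dest: inj_onD)
qed (use assms in simp)

lemma solution_eq:
  assumes "0 \<le> \<gamma>" "p + \<gamma> * c * M p - q = 0"
  shows "solution \<gamma> = p"
  using assms solution_gamma_of equation_iff_gamma_of by metis

lemma solution_in_branch:
  assumes "0 \<le> \<gamma>"
  shows "solution \<gamma> < q + \<beta>" "gamma_of (solution \<gamma>) = \<gamma>"
  using equation_ex1[OF assms] solution_eq[OF assms] equation_iff_gamma_of[OF assms] by metis+

lemma solution_strict_antimono: "strict_antimono_on {0..} solution"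
proof (rule monotone_onI)
  fix \<gamma> \<gamma>' :: real assume "\<gamma> \<in> {0..}" "\<gamma>' \<in> {0..}" "\<gamma> < \<gamma>'"
  then have "solution \<gamma> \<in> {..<q + \<beta>}" "solution \<gamma>' \<in> {..<q + \<beta>}"
      "gamma_of (solution \<gamma>) < gamma_of (solution \<gamma>')"
    using solution_in_branch by auto
  then show "solution \<gamma>' < solution \<gamma>"
    using gamma_of_strict_antimono unfolding monotone_on_def
    by (metis less_asym neq_iff)
qed

lemma solution_has_derivative:
  assumes "p < q + \<beta>"
  shows "(solution has_real_derivative slope p) (at (gamma_of p))"
proof -
  have "(solution has_real_derivative inverse (- (\<beta> + q - p) / (\<beta> * c * M p))) (at (gamma_of p))"
  proof (rule has_field_derivative_inverse_strong[where S = "{..<q + \<beta>}" and f = gamma_of and x = p])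
    show "- (\<beta> + q - p) / (\<beta> * c * M p) \<noteq> 0"
      using assms M_pos[of p] c_pos \<beta>_pos by simp
    show "continuous_on {..<q + \<beta>} gamma_of"
      using gamma_of_has_derivative by (meson DERIV_isCont continuous_at_imp_continuous_on)
  qed (use gamma_of_has_derivative assms solution_gamma_of in auto)
  moreover have "inverse (- (\<beta> + q - p) / (\<beta> * c * M p)) = slope p"
    unfolding slope_def using assms by (simp add: field_simps)
  ultimately show ?thesis by simp
qed

lemma slope_complex_holomorphic: "slope_complex holomorphic_on {z. Re z < q + \<beta>}"
  unfolding slope_complex_def by (intro holomorphic_intros) auto

lemma slope_complex_of_real: "slope_complex (of_real p) = of_real (slope p)"
proof -
  have "exp ((of_real p - of_real a) / of_real \<beta>) = complex_of_real (exp ((p - a) / \<beta>))"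
    by (metis exp_of_real of_real_diff of_real_divide)
  then show ?thesis
    unfolding slope_complex_def slope_def M_def by simp
qed

lemma smooth_on_solution: "smooth_on {0..} solution"
proof (rule smooth_on_autonomous_ode)
  show "open {z. Re z < q + \<beta>}"
    by (simp add: open_halfspace_Re_lt)
  fix \<gamma> :: real assume "\<gamma> \<in> {0..}"
  then have "solution \<gamma> < q + \<beta>" "gamma_of (solution \<gamma>) = \<gamma>"
    using solution_in_branch by auto
  then show "(solution has_real_derivative slope (solution \<gamma>)) (at \<gamma> within {0..})"
    using solution_has_derivative by (metis has_field_derivative_at_within)
qed (use slope_complex_holomorphic slope_complex_of_real solution_in_branch in auto)

end

lemma eq_max_0_linear_iff:
  fixes b k \<rho> :: real
  assumes "0 \<le> k"
  shows "\<rho> = max 0 (b - k * \<rho>) \<longleftrightarrow> \<rho> = max 0 b / (1 + k)"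
proof -
  have pos: "0 < 1 + k" using assms by simp
  have "b - k * \<rho> = \<rho> \<longleftrightarrow> \<rho> * (1 + k) = b" by (auto simp: algebra_simps)
  moreover have "\<rho> * (1 + k) = b \<Longrightarrow> 0 \<le> \<rho> \<longleftrightarrow> 0 \<le> b"
    using pos zero_le_mult_iff by force
  ultimately show ?thesis
    using pos by (cases "0 \<le> b") (auto simp: max_def field_simps)
qed

lemma strict_antimono_on_clipped_ratio:
  fixes r c1 c2 :: real
  assumes "0 < c1" "0 \<le> c2"
  shows "strict_antimono_on {0..<r / c1} (\<lambda>\<gamma>. max 0 (r - \<gamma> * c1) / (1 + \<gamma> * c2))"
proof (rule monotone_onI)
  fix x y assume "x \<in> {0..<r / c1}" "y \<in> {0..<r / c1}" "x < y"
  then have "0 \<le> x" "x < y" "y * c1 < r" using assms by (auto simp: field_simps)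
  then have "0 < r - y * c1" "r - y * c1 < r - x * c1" "0 < 1 + x * c2" "1 + x * c2 \<le> 1 + y * c2"
    using assms by (auto intro: mult_right_mono add_pos_nonneg)
  then show "max 0 (r - y * c1) / (1 + y * c2) < max 0 (r - x * c1) / (1 + x * c2)"
    by (simp add: frac_less)
qed

theorem lemma1:
  fixes K G m0 Ag Bg fc ft ptr rtr :: real
    and phat rhat :: "real \<Rightarrow> real"
  assumes "K > 0" "G > 0" "m0 > 0" "Ag > 0" "Bg > 0" "fc > 0" "ft > 0"
    and "rtr \<ge> 0"
    and phat_def: "\<And>\<gamma>. phat \<gamma> = (THE p. p + \<gamma> * K * mg' Ag Bg fc ft p / fc - ptr = 0)"
    and rhat_def: "\<And>\<gamma>. rhat \<gamma> = (THE \<rho>. \<rho> - max 0 (rtr - \<gamma> * 2 * G *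
                        (3 * \<rho> / fc\<^sup>2 + m0 / (sqrt 6 * fc))) = 0)"
  shows "(\<forall>\<gamma>\<ge>0. \<exists>!p. p + \<gamma> * K * mg' Ag Bg fc ft p / fc - ptr = 0)
       \<and> (\<forall>\<gamma>\<ge>0. \<exists>!\<rho>. \<rho> - max 0 (rtr - \<gamma> * 2 * G *
                        (3 * \<rho> / fc\<^sup>2 + m0 / (sqrt 6 * fc))) = 0)
       \<and> smooth_on {0..} phat
       \<and> strict_antimono_on {0..} phat
       \<and> strict_antimono_on {0..<sqrt 6 * fc * rtr / (2 * G * m0)} rhat
       \<and> (\<forall>\<gamma>\<ge>0. rhat \<gamma> = 1 / (1 + \<gamma> * 6 * G / fc\<^sup>2) *
                        max 0 (rtr - \<gamma> * 2 * G * m0 / (sqrt 6 * fc)))"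
proof -
  interpret P: exp_root_equation Ag "Bg * fc" "ft / 3" "K / fc" ptr
    using assms by unfold_locales auto
  have p_eq: "p + \<gamma> * K * mg' Ag Bg fc ft p / fc - ptr = p + \<gamma> * (K / fc) * P.M p - ptr" for \<gamma> p
    unfolding mg'_def P.M_def by simp
  have p_ex1: "\<exists>!p. p + \<gamma> * K * mg' Ag Bg fc ft p / fc - ptr = 0" if "0 \<le> \<gamma>" for \<gamma>
    unfolding p_eq using P.equation_ex1[OF that] .
  have phat_solution: "phat \<gamma> = P.solution \<gamma>" if "0 \<le> \<gamma>" for \<gamma>
    using P.solution_eq[OF that theI'[OF p_ex1[OF that, unfolded p_eq]]] by (simp add: phat_def p_eq)

  define c1 where "c1 = 2 * G * m0 / (sqrt 6 * fc)"
  define c2 where "c2 = 6 * G / fc\<^sup>2"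
  have "0 < c1" "0 < c2"
    unfolding c1_def c2_def using assms by auto
  have r_eq: "\<rho> - max 0 (rtr - \<gamma> * 2 * G * (3 * \<rho> / fc\<^sup>2 + m0 / (sqrt 6 * fc))) = 0
      \<longleftrightarrow> \<rho> = max 0 (rtr - \<gamma> * c1) / (1 + \<gamma> * c2)" if "0 \<le> \<gamma>" for \<gamma> \<rho>
  proof -
    have linear: "rtr - \<gamma> * 2 * G * (3 * \<rho> / fc\<^sup>2 + m0 / (sqrt 6 * fc)) = (rtr - \<gamma> * c1) - (\<gamma> * c2) * \<rho>"
      unfolding c1_def c2_def by (simp add: algebra_simps)
    have "\<rho> - max 0 (rtr - \<gamma> * 2 * G * (3 * \<rho> / fc\<^sup>2 + m0 / (sqrt 6 * fc))) = 0
        \<longleftrightarrow> \<rho> = max 0 ((rtr - \<gamma> * c1) - (\<gamma> * c2) * \<rho>)"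
      unfolding linear by simp
    also have "\<dots> \<longleftrightarrow> \<rho> = max 0 (rtr - \<gamma> * c1) / (1 + \<gamma> * c2)"
      using eq_max_0_linear_iff that \<open>0 < c2\<close> by simp
    finally show ?thesis .
  qed
  have rhat_eq: "rhat \<gamma> = max 0 (rtr - \<gamma> * c1) / (1 + \<gamma> * c2)" if "0 \<le> \<gamma>" for \<gamma>
    unfolding rhat_def r_eq[OF that] by simp
  have bound: "sqrt 6 * fc * rtr / (2 * G * m0) = rtr / c1"
    unfolding c1_def using assms by (simp add: field_simps)

  have "smooth_on {0..} phat"
    by (rule smooth_on_cong[OF P.smooth_on_solution]) (simp add: phat_solution)
  moreover have "strict_antimono_on {0..} phat"
    by (rule monotone_on_cong[OF P.solution_strict_antimono]) (simp add: phat_solution)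
  moreover have "strict_antimono_on {0..<sqrt 6 * fc * rtr / (2 * G * m0)} rhat"
    unfolding bound
    by (rule monotone_on_cong[OF strict_antimono_on_clipped_ratio[OF \<open>0 < c1\<close> less_imp_le[OF \<open>0 < c2\<close>]]])
      (simp add: rhat_eq)
  moreover have "rhat \<gamma> = 1 / (1 + \<gamma> * 6 * G / fc\<^sup>2) * max 0 (rtr - \<gamma> * 2 * G * m0 / (sqrt 6 * fc))"
    if "0 \<le> \<gamma>" for \<gamma>
    unfolding rhat_eq[OF that] c1_def c2_def by (simp add: mult.assoc)
  ultimately show ?thesis
    using p_ex1 r_eq by simp
qed

end
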